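(* Let $k\ge2$ and $n\ge1$. In the position-randomized auction setting described in the context, fix an initial bid sequence $a_1,\dots,a_n$ of ${\mathcal A}$ and a common initial bid sequence $b_1,\dots,b_n$ of the disadvantaged bidders such that $a_i\ne b_j$ for all $i,j$. Let $W_1$ be the expected number of objects ${\mathcal A}$ wins when ${\mathcal A}$ uses the uniform distribution on permutations and the disadvantaged bidders use some (arbitrary, common) distribution on permutations; $W_2$ be the expected number of objects ${\mathcal A}$ wins when ${\mathcal A}$ does not permute his initial sequence (bids $a_i$ on object $i$) and the disadvantaged bidders use the uniform distribution; $W_3$ be the expected number of objects ${\mathcal A}$ wins when ${\mathcal A}$ uses an arbitrary given distribution on permutations and the disadvantaged bidders use the uniform distribution. Then $W_1\ge W_2=W_3$.
   Context: Auction model: there are $k$ bidders, one adversary ${\mathcal A}$ and $k-1$ disadvantaged bidders, and $n$ objects auctioned simultaneously. Each object is won by the highest bidder on it; if $m$ bidders tie for the highest bid, each wins with probability $1/m$. A position-randomized bidding algorithm: a bidder chooses an initial sequence $x_1,\dots,x_n$ of positive reals (with $\sum x_j\le1$) and a probability distribution on permutations $\sigma$ of $\{1,\dots,n\}$; he draws $\sigma$ and bids $x_j$ on object $\sigma(j)$. All disadvantaged bidders use the same initial sequence and the same permutation distribution, drawing their permutations independently of each other; ${\mathcal A}$'s permutation is drawn independently of theirs. *)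

theory Defs
  imports "HOL-Probability.Probability"
begin

text \<open>A bidder with initial
 sequence x and permutation s bids x i on object s i, i.e. bids x (inv s j) on object j.\<close>

definition valid_seq :: "nat \<Rightarrow> (nat \<Rightarrow> real) \<Rightarrow> bool" where
  "valid_seq n x \<longleftrightarrow> (\<forall>i<n. x i > 0) \<and> (\<Sum>i<n. x i) \<le> 1"

definition perm_dist :: "nat \<Rightarrow> (nat \<Rightarrow> nat) pmf \<Rightarrow> bool" where
  "perm_dist n P \<longleftrightarrow> set_pmf P \<subseteq> {s. s permutes {..<n}}"

definition uniform_perms :: "nat \<Rightarrow> (nat \<Rightarrow> nat) pmf" where
  "uniform_perms n = pmf_of_set {s. s permutes {..<n}}"

definition bid_on :: "(nat \<Rightarrow> real) \<Rightarrow> (nat \<Rightarrow> nat) \<Rightarrow> nat \<Rightarrow> real" where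
  "bid_on x s j = x (inv s j)"

text \<open>Probability that the adversary (bid x) wins an object on which the m disadvantaged
 bidders bid y 0, ..., y (m-1): highest bid wins, ties broken uniformly.\<close>
definition win_share :: "real \<Rightarrow> (nat \<Rightarrow> real) \<Rightarrow> nat \<Rightarrow> real" where
  "win_share x y m = (if \<exists>l<m. y l > x then 0
       else 1 / (1 + real (card {l. l < m \<and> y l = x})))"

definition expected_wins ::
  "nat \<Rightarrow> nat \<Rightarrow> (nat \<Rightarrow> real) \<Rightarrow> (nat \<Rightarrow> real) \<Rightarrow> (nat \<Rightarrow> nat) pmf \<Rightarrow> (nat \<Rightarrow> nat) pmf \<Rightarrow> real" where
  "expected_wins k n a b P Q =
     measure_pmf.expectation (pair_pmf P (Pi_pmf {..<k-1} id (\<lambda>_. Q)))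
       (\<lambda>(s, t). \<Sum>j<n. win_share (bid_on a s j) (\<lambda>l. bid_on b (t l) j) (k-1))"

end

theory Submission
  imports Defs "HOL-Combinatorics.Permutations"
begin

text \<open>Without ties the adversary wins an object exactly when each disadvantaged bidder
  bids below him there, and these events are independent, so object \<open>j\<close> is won with
  probability \<open>q\<^sub>j(x)\<^bsup>k-1\<^esup>\<close>, where \<open>x\<close> is the adversary's bid on \<open>j\<close> and \<open>q\<^sub>j(x)\<close>
  (\<open>below_prob\<close>) the probability that a disadvantaged bidder bids below \<open>x\<close> on \<open>j\<close>.
  If the disadvantaged bidders permute uniformly, \<open>q\<^sub>j(x) = p(x)\<close>, the fraction of the \<open>b\<^sub>i\<close>
  below \<open>x\<close> (\<open>below_fraction\<close>), whatever \<open>j\<close> is; the adversary then wins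
  \<open>\<Sum>\<^sub>i p(a\<^sub>i)\<^bsup>k-1\<^esup>\<close> in expectation, however he permutes. If instead the adversary
  permutes uniformly, he wins \<open>\<Sum>\<^sub>i avg\<^sub>j q\<^sub>j(a\<^sub>i)\<^bsup>k-1\<^esup>\<close>; since \<open>avg\<^sub>j q\<^sub>j = p\<close> for
  every distribution of the disadvantaged bidders, Jensen's inequality for \<open>t \<mapsto> t\<^bsup>k-1\<^esup>\<close>
  bounds this from below by \<open>\<Sum>\<^sub>i p(a\<^sub>i)\<^bsup>k-1\<^esup>\<close>.\<close>

definition below_fraction :: "nat \<Rightarrow> (nat \<Rightarrow> real) \<Rightarrow> real \<Rightarrow> real" where
  "below_fraction n b x = (\<Sum>i<n. of_bool (b i < x)) / real n"

definition below_prob :: "(nat \<Rightarrow> nat) pmf \<Rightarrow> (nat \<Rightarrow> real) \<Rightarrow> nat \<Rightarrow> real \<Rightarrow> real" where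
  "below_prob Q b j x = measure_pmf.expectation Q (\<lambda>u. of_bool (bid_on b u j < x))"

lemma expectation_cong_set_pmf:
  fixes f g :: "'a \<Rightarrow> real"
  assumes "\<And>x. x \<in> set_pmf p \<Longrightarrow> f x = g x"
  shows "measure_pmf.expectation p f = measure_pmf.expectation p g"
  by (rule integral_cong_AE) (use assms in \<open>auto simp: AE_measure_pmf_iff\<close>)

lemma expectation_pair_pmf_finite:
  fixes h :: "'a \<times> 'b \<Rightarrow> real"
  assumes "finite (set_pmf P)" "finite (set_pmf R)"
  shows "measure_pmf.expectation (pair_pmf P R) h =
         measure_pmf.expectation P (\<lambda>s. measure_pmf.expectation R (\<lambda>t. h (s, t)))"
proof -
  have "measure_pmf.expectation (pair_pmf P R) h =
        (\<Sum>x\<in>set_pmf P \<times> set_pmf R. pmf (pair_pmf P R) x * h x)"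
    by (subst integral_measure_pmf[of "set_pmf P \<times> set_pmf R"]) (use assms in auto)
  also have "\<dots> = (\<Sum>s\<in>set_pmf P. \<Sum>t\<in>set_pmf R. pmf P s * (pmf R t * h (s, t)))"
    unfolding sum.cartesian_product by (intro sum.cong) (auto simp: pmf_pair)
  also have "\<dots> = (\<Sum>s\<in>set_pmf P. pmf P s * measure_pmf.expectation R (\<lambda>t. h (s, t)))"
    by (intro sum.cong refl, subst integral_measure_pmf[of "set_pmf R"])
       (use assms in \<open>auto simp: sum_distrib_left\<close>)
  also have "\<dots> = measure_pmf.expectation P (\<lambda>s. measure_pmf.expectation R (\<lambda>t. h (s, t)))"
    by (subst integral_measure_pmf[of "set_pmf P"]) (use assms in auto)
  finally show ?thesis .
qed

lemma expectation_Pi_pmf_prod_power: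
  fixes g :: "'b \<Rightarrow> real"
  assumes "finite (set_pmf Q)" "\<And>u. u \<in> set_pmf Q \<Longrightarrow> g u \<ge> 0"
  shows "measure_pmf.expectation (Pi_pmf {..<m} d (\<lambda>_. Q)) (\<lambda>t. \<Prod>l<m. g (t l)) =
         measure_pmf.expectation Q g ^ m"
  using expectation_prod_Pi_pmf[of "{..<m}" "\<lambda>_. Q" "\<lambda>_. g" d]
  by (simp add: assms integrable_measure_pmf_finite)

lemma sum_permutes_apply: "p permutes S \<Longrightarrow> (\<Sum>x\<in>S. g (p x)) = sum g S"
  using sum.permute[of p S g] by (simp add: comp_def)

lemma sum_permutes_inv: "p permutes S \<Longrightarrow> (\<Sum>x\<in>S. g (inv p x)) = sum g S"
  by (rule sum_permutes_apply[OF permutes_inv])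

lemma sum_permutations_apply_independent:
  assumes "i \<in> S" "j \<in> S"
  shows "(\<Sum>p\<in>{p. p permutes S}. f (p i)) = (\<Sum>p\<in>{p. p permutes S}. f (p j))"
  by (rule sum.reindex_bij_witness[where i="\<lambda>p. p \<circ> Transposition.transpose j i"
                                      and j="\<lambda>p. p \<circ> Transposition.transpose j i"])
     (use assms in \<open>auto simp: comp_assoc intro!: permutes_compose permutes_swap_id\<close>)

lemma sum_permutations_inv_apply:
  assumes "finite S" "j \<in> S"
  shows "real (card S) * (\<Sum>p\<in>{p. p permutes S}. f (inv p j)) = fact (card S) * sum f S"
proof -
  let ?Perms = "{p. p permutes S}"
  have "(\<Sum>p\<in>?Perms. f (inv p j)) = (\<Sum>p\<in>?Perms. f (p j))"
    by (subst sum_permutations_inverse) (auto intro!: sum.cong simp: permutes_inv_inv)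
  then have "real (card S) * (\<Sum>p\<in>?Perms. f (inv p j)) = (\<Sum>i\<in>S. \<Sum>p\<in>?Perms. f (p i))"
    using sum_permutations_apply_independent[OF _ \<open>j \<in> S\<close>, of _ f] by simp
  also have "\<dots> = (\<Sum>p\<in>?Perms. \<Sum>i\<in>S. f (p i))"
    by (rule sum.swap)
  also have "\<dots> = (\<Sum>p\<in>?Perms. sum f S)"
    by (rule sum.cong[OF refl]) (rule sum_permutes_apply, simp)
  also have "\<dots> = fact (card S) * sum f S"
    by (simp add: card_permutations[OF refl \<open>finite S\<close>])
  finally show ?thesis .
qed

lemma expectation_uniform_permutation_inv:
  fixes f :: "'a \<Rightarrow> real"
  assumes "finite S" "j \<in> S"
  shows "measure_pmf.expectation (pmf_of_set {p. p permutes S}) (\<lambda>p. f (inv p j)) =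
         sum f S / card S"
proof -
  have "{p. p permutes S} \<noteq> {}" using permutes_id by blast
  moreover have "card S > 0" using assms card_gt_0_iff by blast
  ultimately show ?thesis
    using sum_permutations_inv_apply[OF assms, of f]
    by (simp add: integral_pmf_of_set finite_permutations[OF \<open>finite S\<close>]
                  card_permutations[OF refl \<open>finite S\<close>] field_simps)
qed

lemma permutes_if_perm_dist: "perm_dist n P \<Longrightarrow> s \<in> set_pmf P \<Longrightarrow> s permutes {..<n}"
  unfolding perm_dist_def by auto

lemma finite_set_pmf_if_perm_dist: "perm_dist n P \<Longrightarrow> finite (set_pmf P)"
  unfolding perm_dist_def using finite_permutations[of "{..<n}"] by (auto intro: finite_subset)

lemma perm_dist_uniform_perms: "perm_dist n (uniform_perms n)"
  unfolding perm_dist_def uniform_perms_def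
  by (subst set_pmf_of_set) (auto simp: finite_permutations intro: permutes_id)

lemma perm_dist_return_id: "perm_dist n (return_pmf id)"
  unfolding perm_dist_def by (auto intro: permutes_id)

lemma bid_on_in_range:
  assumes "s permutes {..<n}" "j < n"
  shows "bid_on x s j \<in> x ` {..<n}"
proof -
  have "inv s j < n"
    using permutes_in_image[OF permutes_inv[OF assms(1)]] assms(2) by simp
  then show ?thesis unfolding bid_on_def by blast
qed

lemma expectation_uniform_perms_bid_on:
  "j < n \<Longrightarrow> measure_pmf.expectation (uniform_perms n) (\<lambda>u. f (bid_on x u j)) =
              (\<Sum>i<n. f (x i)) / real n"
  unfolding uniform_perms_def bid_on_def
  using expectation_uniform_permutation_inv[of "{..<n}" j "\<lambda>i. f (x i)"] by simp

lemma sum_bid_on: "s permutes {..<n} \<Longrightarrow> (\<Sum>j<n. f (bid_on x s j)) = (\<Sum>i<n. f (x i))"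
  unfolding bid_on_def by (rule sum_permutes_inv)

lemma win_share_no_ties:
  assumes "\<forall>l<m. y l \<noteq> x"
  shows "win_share x y m = (\<Prod>l<m. of_bool (y l < x))"
proof (cases "\<exists>l<m. y l > x")
  case True
  then obtain l where "l < m" "x < y l" by blast
  then have "(\<Prod>l<m. of_bool (y l < x)) = (0::real)"
    by (subst prod_zero_iff) (auto intro!: bexI[of _ l])
  with True show ?thesis by (simp add: win_share_def)
next
  case False
  with assms have "\<forall>l<m. y l < x"
    by (meson linorder_neqE_linordered_idom)
  moreover have "{l. l < m \<and> y l = x} = {}"
    using assms by auto
  ultimately show ?thesis
    using False by (simp add: win_share_def)
qed

lemma expectation_win_share_no_ties:
  assumes "perm_dist n Q" "j < n" "x \<notin> b ` {..<n}"
  shows "measure_pmf.expectation (Pi_pmf {..<m} d (\<lambda>_. Q))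
           (\<lambda>t. win_share x (\<lambda>l. bid_on b (t l) j) m) = below_prob Q b j x ^ m"
proof -
  have "measure_pmf.expectation (Pi_pmf {..<m} d (\<lambda>_. Q))
          (\<lambda>t. win_share x (\<lambda>l. bid_on b (t l) j) m) =
        measure_pmf.expectation (Pi_pmf {..<m} d (\<lambda>_. Q))
          (\<lambda>t. \<Prod>l<m. of_bool (bid_on b (t l) j < x))"
  proof (rule expectation_cong_set_pmf)
    fix t assume "t \<in> set_pmf (Pi_pmf {..<m} d (\<lambda>_. Q))"
    then have "t l permutes {..<n}" if "l < m" for l
      using that permutes_if_perm_dist[OF assms(1)] by (auto simp: set_Pi_pmf PiE_dflt_def)
    then have "bid_on b (t l) j \<in> b ` {..<n}" if "l < m" for l
      using that bid_on_in_range[OF _ assms(2)] by blast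
    then have "\<forall>l<m. bid_on b (t l) j \<noteq> x"
      using assms(3) by auto
    then show "win_share x (\<lambda>l. bid_on b (t l) j) m = (\<Prod>l<m. of_bool (bid_on b (t l) j < x))"
      by (rule win_share_no_ties)
  qed
  also have "\<dots> = below_prob Q b j x ^ m"
    unfolding below_prob_def
    by (rule expectation_Pi_pmf_prod_power) (auto intro: finite_set_pmf_if_perm_dist[OF assms(1)])
  finally show ?thesis .
qed

lemma expected_wins_no_ties:
  assumes "perm_dist n P" "perm_dist n Q" "\<forall>i<n. \<forall>j<n. a i \<noteq> b j"
  shows "expected_wins k n a b P Q =
         measure_pmf.expectation P (\<lambda>s. \<Sum>j<n. below_prob Q b j (bid_on a s j) ^ (k - 1))"
proof -
  let ?R = "Pi_pmf {..<k-1} id (\<lambda>_. Q)"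
  have "finite (set_pmf ?R)"
    by (rule finite_subset[OF set_Pi_pmf_subset'])
       (use finite_set_pmf_if_perm_dist[OF assms(2)] in auto)
  then have "expected_wins k n a b P Q = measure_pmf.expectation P (\<lambda>s. \<Sum>j<n.
               measure_pmf.expectation ?R (\<lambda>t. win_share (bid_on a s j) (\<lambda>l. bid_on b (t l) j) (k-1)))"
    unfolding expected_wins_def
    by (simp add: expectation_pair_pmf_finite finite_set_pmf_if_perm_dist[OF assms(1)]
                  Bochner_Integration.integral_sum integrable_measure_pmf_finite)
  also have "\<dots> = measure_pmf.expectation P (\<lambda>s. \<Sum>j<n. below_prob Q b j (bid_on a s j) ^ (k - 1))"
  proof (intro expectation_cong_set_pmf sum.cong refl)
    fix s j assume s: "s \<in> set_pmf P" and "j \<in> {..<n}"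
    then obtain i where "i < n" "bid_on a s j = a i"
      using bid_on_in_range[OF permutes_if_perm_dist[OF assms(1) s]] by auto
    then have "bid_on a s j \<notin> b ` {..<n}"
      using assms(3) by auto
    then show "measure_pmf.expectation ?R (\<lambda>t. win_share (bid_on a s j) (\<lambda>l. bid_on b (t l) j) (k-1))
               = below_prob Q b j (bid_on a s j) ^ (k - 1)"
      using expectation_win_share_no_ties[OF assms(2)] \<open>j \<in> {..<n}\<close> by simp
  qed
  finally show ?thesis .
qed

lemma below_prob_uniform_perms:
  "j < n \<Longrightarrow> below_prob (uniform_perms n) b j x = below_fraction n b x"
  unfolding below_prob_def below_fraction_def by (rule expectation_uniform_perms_bid_on)

lemma average_below_prob:
  assumes "perm_dist n Q"
  shows "(\<Sum>j<n. below_prob Q b j x) / real n = below_fraction n b x"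
proof -
  have "(\<Sum>j<n. below_prob Q b j x) =
        measure_pmf.expectation Q (\<lambda>u. \<Sum>j<n. of_bool (bid_on b u j < x))"
    unfolding below_prob_def
    by (intro Bochner_Integration.integral_sum[symmetric] integrable_measure_pmf_finite
              finite_set_pmf_if_perm_dist[OF assms])
  also have "\<dots> = measure_pmf.expectation Q (\<lambda>u. \<Sum>i<n. of_bool (b i < x))"
    by (intro expectation_cong_set_pmf sum_bid_on permutes_if_perm_dist[OF assms])
  finally show ?thesis by (simp add: below_fraction_def)
qed

lemma convex_on_power_nonneg: "convex_on {0::real..} (\<lambda>x. x ^ m)"
proof (cases "even m")
  case True
  then show ?thesis by (rule convex_on_subset[OF convex_power_even]) auto
next
  case False
  then show ?thesis by (rule convex_power_odd)
qed

lemma power_of_mean_le_mean_of_powers: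
  fixes q :: "nat \<Rightarrow> real"
  assumes "n \<ge> 1" "\<And>j. j < n \<Longrightarrow> q j \<ge> 0"
  shows "((\<Sum>j<n. q j) / real n) ^ m \<le> (\<Sum>j<n. q j ^ m) / real n"
proof -
  have "(\<Sum>j<n. (1 / real n) *\<^sub>R q j) ^ m \<le> (\<Sum>j<n. (1 / real n) * q j ^ m)"
    by (rule convex_on_sum[OF _ _ convex_on_power_nonneg, of "{..<n}"])
       (use assms in \<open>auto simp: lessThan_empty_iff\<close>)
  then show ?thesis by (simp add: sum_divide_distrib[symmetric] sum_distrib_left[symmetric])
qed

lemma expected_wins_uniform_bidders:
  assumes "perm_dist n P" "\<forall>i<n. \<forall>j<n. a i \<noteq> b j"
  shows "expected_wins k n a b P (uniform_perms n) = (\<Sum>i<n. below_fraction n b (a i) ^ (k - 1))"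
proof -
  have "expected_wins k n a b P (uniform_perms n) =
        measure_pmf.expectation P (\<lambda>s. \<Sum>j<n. below_fraction n b (bid_on a s j) ^ (k - 1))"
    by (simp add: expected_wins_no_ties[OF assms(1) perm_dist_uniform_perms assms(2)]
                  below_prob_uniform_perms)
  also have "\<dots> = measure_pmf.expectation P (\<lambda>s. \<Sum>i<n. below_fraction n b (a i) ^ (k - 1))"
    by (intro expectation_cong_set_pmf sum_bid_on permutes_if_perm_dist[OF assms(1)])
  finally show ?thesis by simp
qed

lemma expected_wins_uniform_adversary_ge:
  assumes "n \<ge> 1" "perm_dist n Q" "\<forall>i<n. \<forall>j<n. a i \<noteq> b j"
  shows "expected_wins k n a b (uniform_perms n) Q \<ge> (\<Sum>i<n. below_fraction n b (a i) ^ (k - 1))"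
proof -
  let ?q = "\<lambda>j i. below_prob Q b j (a i) ^ (k - 1)"
  have "expected_wins k n a b (uniform_perms n) Q =
        (\<Sum>j<n. measure_pmf.expectation (uniform_perms n) (\<lambda>s. below_prob Q b j (bid_on a s j) ^ (k - 1)))"
    unfolding expected_wins_no_ties[OF perm_dist_uniform_perms assms(2,3)]
    by (intro Bochner_Integration.integral_sum integrable_measure_pmf_finite
              finite_set_pmf_if_perm_dist[OF perm_dist_uniform_perms])
  also have "\<dots> = (\<Sum>j<n. (\<Sum>i<n. ?q j i) / real n)"
    by (rule sum.cong[OF refl]) (rule expectation_uniform_perms_bid_on, simp)
  also have "\<dots> = (\<Sum>i<n. (\<Sum>j<n. ?q j i) / real n)"
    unfolding sum_divide_distrib by (rule sum.swap)
  also have "\<dots> \<ge> (\<Sum>i<n. ((\<Sum>j<n. below_prob Q b j (a i)) / real n) ^ (k - 1))"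
    by (intro sum_mono power_of_mean_le_mean_of_powers assms(1))
       (simp add: below_prob_def integral_nonneg_AE)
  finally show ?thesis by (simp add: average_below_prob[OF assms(2)])
qed

theorem lemma4p1:
  fixes k n :: nat and a b :: "nat \<Rightarrow> real" and P Q :: "(nat \<Rightarrow> nat) pmf"
  assumes "k \<ge> 2" and "n \<ge> 1"
    and "valid_seq n a" and "valid_seq n b"
    and "\<forall>i<n. \<forall>j<n. a i \<noteq> b j"
    and "perm_dist n P" and "perm_dist n Q"
  shows "expected_wins k n a b (uniform_perms n) Q \<ge> expected_wins k n a b (return_pmf id) (uniform_perms n)
       \<and> expected_wins k n a b (return_pmf id) (uniform_perms n) = expected_wins k n a b P (uniform_perms n)"
  using expected_wins_uniform_adversary_ge[OF assms(2,7,5)]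
        expected_wins_uniform_bidders[OF perm_dist_return_id assms(5)]
        expected_wins_uniform_bidders[OF assms(6,5)]
  by simp

end
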